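(* Assume the capacities satisfy (C1)–(C3), with limiting sequence $\{g_n\}_{n\ge0}$ from (C2). Then there exists $\alpha>0$ such that $$\sum_{n=0}^\infty n\,\big|g^{(N)}_n-g_n\big|=O(N^{-\alpha}).$$
   Context: Capacities $\lambda_1,\dots,\lambda_N>0$ deterministic; $\mu_N=\frac1N\sum_i\lambda_i$, $\nu_N=\sum_i\lambda_i^2/\sum_i\lambda_i$, $f^{(N)}_n=\frac1N\sum_i e^{-\lambda_i}\frac{\lambda_i^n}{n!}$, $g^{(N)}_n=\frac{1}{N\mu_N}\sum_i e^{-\lambda_i}\frac{\lambda_i^{n+1}}{n!}$ ($n\ge0$); $d_{TV}(p,q)=\frac12\sum_j|p_j-q_j|$. (C1): there are $\mu\in(0,\infty)$, $\nu\in(1,\infty)$, $\alpha_1>0$ with $|\mu_N-\mu|,|\nu_N-\nu|=O(N^{-\alpha_1})$. (C2): there are sequences $\{f_n\}$, $\{g_n\}$ independent of $N$ and $\alpha_2>0$ with $d_{TV}(f^{(N)},f)=O(N^{-\alpha_2})$, $d_{TV}(g^{(N)},g)=O(N^{-\alpha_2})$. (C3): there is $\tau>3$ such that for every $\varepsilon>0$ (with $\gamma:=\frac1{\tau-1}+\varepsilon<\frac12$), $\limsup_N\frac1N\sum_i\lambda_i^{\tau-1-\varepsilon}<\infty$ and $\max_i\lambda_i\le N^\gamma$. *)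

theory Defs
  imports "HOL-Analysis.Analysis" "HOL-Library.Landau_Symbols"
begin

text \<open>Capacities form a triangular array: for system size N the capacities are
  lam N i for i < N.\<close>

definition muN :: "(nat \<Rightarrow> nat \<Rightarrow> real) \<Rightarrow> nat \<Rightarrow> real" where
  "muN lam N = (\<Sum>i<N. lam N i) / real N"

definition nuN :: "(nat \<Rightarrow> nat \<Rightarrow> real) \<Rightarrow> nat \<Rightarrow> real" where
  "nuN lam N = (\<Sum>i<N. (lam N i)^2) / (\<Sum>i<N. lam N i)"

definition fN :: "(nat \<Rightarrow> nat \<Rightarrow> real) \<Rightarrow> nat \<Rightarrow> nat \<Rightarrow> real" where
  "fN lam N n = (\<Sum>i<N. exp (- lam N i) * (lam N i)^n / fact n) / real N"

definition gN :: "(nat \<Rightarrow> nat \<Rightarrow> real) \<Rightarrow> nat \<Rightarrow> nat \<Rightarrow> real" where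
  "gN lam N n = (\<Sum>i<N. exp (- lam N i) * (lam N i)^(n+1) / fact n) / (real N * muN lam N)"

text \<open>Total variation distance of two sequences indexed by nat (meaningful when
  the difference is absolutely summable).\<close>
definition d_TV :: "(nat \<Rightarrow> real) \<Rightarrow> (nat \<Rightarrow> real) \<Rightarrow> real" where
  "d_TV p q = (\<Sum>j. \<bar>p j - q j\<bar>) / 2"

definition C1 :: "(nat \<Rightarrow> nat \<Rightarrow> real) \<Rightarrow> bool" where
  "C1 lam \<longleftrightarrow> (\<exists>\<mu> \<nu> \<alpha>1. \<mu> > 0 \<and> \<nu> > 1 \<and> \<alpha>1 > 0 \<and>
     (\<lambda>N. \<bar>muN lam N - \<mu>\<bar>) \<in> O(\<lambda>N. real N powr (- \<alpha>1)) \<and>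
     (\<lambda>N. \<bar>nuN lam N - \<nu>\<bar>) \<in> O(\<lambda>N. real N powr (- \<alpha>1)))"

text \<open>(C2) for given limit sequences f and g; d_TV being O(...) includes
  that it is finite, i.e. the differences are (eventually) absolutely summable.\<close>
definition C2 :: "(nat \<Rightarrow> nat \<Rightarrow> real) \<Rightarrow> (nat \<Rightarrow> real) \<Rightarrow> (nat \<Rightarrow> real) \<Rightarrow> bool" where
  "C2 lam f g \<longleftrightarrow> (\<exists>\<alpha>2 > 0.
     (\<forall>\<^sub>F N in sequentially. summable (\<lambda>n. \<bar>fN lam N n - f n\<bar>)
                               \<and> summable (\<lambda>n. \<bar>gN lam N n - g n\<bar>)) \<and>
     (\<lambda>N. d_TV (fN lam N) f) \<in> O(\<lambda>N. real N powr (- \<alpha>2)) \<and>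
     (\<lambda>N. d_TV (gN lam N) g) \<in> O(\<lambda>N. real N powr (- \<alpha>2)))"

definition C3 :: "(nat \<Rightarrow> nat \<Rightarrow> real) \<Rightarrow> bool" where
  "C3 lam \<longleftrightarrow> (\<exists>\<tau> > 3. \<forall>\<epsilon> > 0. 1 / (\<tau> - 1) + \<epsilon> < 1 / 2 \<longrightarrow>
     (\<exists>B. \<forall>\<^sub>F N in sequentially. (\<Sum>i<N. lam N i powr (\<tau> - 1 - \<epsilon>)) / real N \<le> B) \<and>
     (\<forall>N \<ge> 1. \<forall>i < N. lam N i \<le> real N powr (1 / (\<tau> - 1) + \<epsilon>)))"

end

theory Submission
  imports Defs
begin

text \<open>
  g^(N) is a mixture, with weights proportional to the capacities, of size-biased Poisson
  laws. By Jensen's inequality its moment of order 1 + q is at most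
  2 + 2 (\<Sum>_i \<lambda>_i^p) / (N \<mu>_N) for every p \<ge> 2 + q, and (C1), (C3) keep this bounded for some
  q > 0; by Fatou's lemma the limit g inherits the bound. Splitting \<Sum>_n n |g^(N)_n - g_n| at
  n = X, the head is at most 2 X d_TV = O(X N^-\<alpha>) by (C2) and the tail at most X^-q times
  the two moments; X = N^(\<alpha>/(1+q)) balances both at N^(-\<alpha> q/(1+q)).
\<close>

definition poisson :: "real \<Rightarrow> nat \<Rightarrow> real" where
  "poisson l m = exp (- l) * l ^ m / fact m"

lemma poisson_nonneg: "l \<ge> 0 \<Longrightarrow> poisson l m \<ge> 0"
  by (simp add: poisson_def)

lemma poisson_Suc: "poisson l (Suc m) = l / real (Suc m) * poisson l m"
  by (simp add: poisson_def field_simps del: of_nat_Suc)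

lemma poisson_sums_one: "poisson l sums 1"
proof -
  have "(\<lambda>m. exp (- l) * (l ^ m / fact m)) sums (exp (- l) * exp l)"
    using exp_converges[of l] by (intro sums_mult) (simp add: divide_inverse mult.commute)
  then show ?thesis by (simp add: poisson_def[abs_def] exp_minus)
qed

lemma poisson_mean_sums: "(\<lambda>m. real m * poisson l m) sums l"
proof -
  have "(\<lambda>m. l * poisson l m) sums l"
    using sums_mult[OF poisson_sums_one, of l] by simp
  then have "(\<lambda>m. real (Suc m) * poisson l (Suc m)) sums l"
    by (simp add: poisson_Suc del: of_nat_Suc)
  then show ?thesis by (subst (asm) sums_Suc_iff) simp
qed

lemma powr_le_tangent:
  fixes q s t :: real
  assumes "0 \<le> q" "q \<le> 1" "0 < s" "0 < t"
  shows "t powr q \<le> s powr q + q * s powr (q - 1) * (t - s)"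
proof -
  have "t powr q * s powr (1 - q) \<le> q * t + (1 - q) * s"
    using Youngs_inequality_0[of q "1 - q" t s] assms by simp
  then have "t powr q * s powr (1 - q) * s powr (q - 1) \<le> (q * t + (1 - q) * s) * s powr (q - 1)"
    using assms by (intro mult_right_mono) auto
  moreover have "s powr (1 - q) * s powr (q - 1) = 1" "s * s powr (q - 1) = s powr q"
    using assms by (simp_all add: powr_mult_base flip: powr_add)
  ultimately show ?thesis by (simp add: algebra_simps)
qed

lemma poisson_shifted_powr_moment:
  assumes "0 \<le> l" "0 \<le> q" "q \<le> 1"
  shows "summable (\<lambda>m. (real m + 1) powr q * poisson l m)"
    and "(\<Sum>m. (real m + 1) powr q * poisson l m) \<le> (l + 1) powr q"
proof -
  define s where "s = l + 1"
  define c where "c = q * s powr (q - 1)"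
  \<comment> \<open>Jensen: t powr q is concave, so it lies below its tangent at s = E (m + 1).\<close>
  define T where "T m = s powr q * poisson l m + c * (real m * poisson l m) + c * (1 - s) * poisson l m" for m
  have "T sums (s powr q * 1 + c * l + c * (1 - s) * 1)"
    unfolding T_def by (intro sums_add sums_mult poisson_sums_one poisson_mean_sums)
  then have T_sums: "T sums (s powr q)"
    by (simp add: s_def algebra_simps)
  have le_T: "(real m + 1) powr q * poisson l m \<le> T m" for m
  proof -
    have "(real m + 1) powr q * poisson l m \<le> (s powr q + c * (real m + 1 - s)) * poisson l m"
      using powr_le_tangent[of q s "real m + 1"] assms
      by (intro mult_right_mono) (auto simp: s_def c_def poisson_nonneg)
    then show ?thesis
      by (simp add: T_def algebra_simps)
  qed
  show summable: "summable (\<lambda>m. (real m + 1) powr q * poisson l m)"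
    by (rule summable_comparison_test'[OF sums_summable[OF T_sums], of 0])
      (use le_T assms in \<open>auto simp: poisson_nonneg\<close>)
  have "(\<Sum>m. (real m + 1) powr q * poisson l m) \<le> suminf T"
    by (rule suminf_le[OF le_T summable sums_summable[OF T_sums]])
  then show "(\<Sum>m. (real m + 1) powr q * poisson l m) \<le> (l + 1) powr q"
    using sums_unique[OF T_sums] by (simp add: s_def)
qed

lemma poisson_size_biased_powr_moment:
  assumes "0 \<le> l" "0 \<le> q" "q \<le> 1"
  shows "summable (\<lambda>n. real n powr (1 + q) * (l * poisson l n))"
    and "(\<Sum>n. real n powr (1 + q) * (l * poisson l n)) \<le> l\<^sup>2 * (l + 1) powr q"
proof -
  let ?h = "\<lambda>n. real n powr (1 + q) * (l * poisson l n)"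
  let ?M = "\<Sum>m. (real m + 1) powr q * poisson l m"
  have shift: "?h (Suc m) = l\<^sup>2 * ((real m + 1) powr q * poisson l m)" for m
    by (simp add: poisson_Suc powr_add power2_eq_square field_simps)
  have "(\<lambda>m. ?h (Suc m)) sums (l\<^sup>2 * ?M)"
    unfolding shift by (intro sums_mult summable_sums poisson_shifted_powr_moment(1) assms)
  then have h_sums: "?h sums (l\<^sup>2 * ?M)"
    using assms by (subst (asm) sums_Suc_iff) simp
  then show "summable ?h"
    by (rule sums_summable)
  have "l\<^sup>2 * ?M \<le> l\<^sup>2 * (l + 1) powr q"
    by (intro mult_left_mono poisson_shifted_powr_moment(2) assms) simp
  then show "suminf ?h \<le> l\<^sup>2 * (l + 1) powr q"
    using sums_unique[OF h_sums] by simp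
qed

lemma sq_mul_add_one_powr_le:
  fixes l q p :: real
  assumes l: "0 \<le> l" and q: "0 \<le> q" "q \<le> 1" and p: "2 + q \<le> p"
  shows "l\<^sup>2 * (l + 1) powr q \<le> 2 * l + 2 * l powr p"
proof (cases "l \<le> 1")
  case True
  have "(l + 1) powr q \<le> 2 powr q"
    using l True q by (intro powr_mono2) auto
  also have "\<dots> \<le> 2 powr 1"
    using q by (intro powr_mono) auto
  finally have "(l + 1) powr q \<le> 2"
    by simp
  moreover have "l\<^sup>2 \<le> l"
    using l True by (simp add: power2_eq_square mult_left_le)
  ultimately have "l\<^sup>2 * (l + 1) powr q \<le> l * 2"
    using l by (intro mult_mono) auto
  then show ?thesis
    using powr_ge_zero[of l p] by linarith
next
  case False
  have "(l + 1) powr q \<le> (2 * l) powr q"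
    using False q by (intro powr_mono2) auto
  also have "\<dots> \<le> 2 * l powr q"
    using l q powr_mono[of q 1 2] by (simp add: powr_mult mult_right_mono)
  finally have "l\<^sup>2 * (l + 1) powr q \<le> l\<^sup>2 * (2 * l powr q)"
    by (intro mult_left_mono) auto
  also have "\<dots> = 2 * l powr (2 + q)"
    using False by (simp add: powr_add powr_realpow)
  also have "\<dots> \<le> 2 * l powr p"
    using False p by (intro mult_left_mono powr_mono) auto
  finally show ?thesis
    using l by simp
qed

lemma gN_eq_poisson_mixture:
  "gN lam N n = (\<Sum>i<N. lam N i * poisson (lam N i) n) / (\<Sum>i<N. lam N i)"
proof (cases "N = 0")
  case False
  then show ?thesis
    by (simp add: gN_def muN_def poisson_def mult_ac)
qed (simp add: gN_def)

lemma gN_nonneg: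
  assumes "\<And>i. i < N \<Longrightarrow> 0 < lam N i"
  shows "0 \<le> gN lam N n"
  unfolding gN_eq_poisson_mixture using assms
  by (intro divide_nonneg_nonneg sum_nonneg mult_nonneg_nonneg poisson_nonneg) (auto simp: less_imp_le)

lemma gN_powr_moment_le:
  assumes pos: "\<And>i. i < N \<Longrightarrow> 0 < lam N i" and N: "0 < N"
    and q: "0 \<le> q" "q \<le> 1" and p: "2 + q \<le> p"
  shows "summable (\<lambda>n. real n powr (1 + q) * gN lam N n)"
    and "(\<Sum>n. real n powr (1 + q) * gN lam N n)
           \<le> 2 + 2 * ((\<Sum>i<N. lam N i powr p) / real N) / muN lam N"
proof -
  define D where "D = (\<Sum>i<N. lam N i)"
  have D: "0 < D"
    unfolding D_def using N pos by (intro sum_pos) auto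
  define h where "h i n = real n powr (1 + q) * (lam N i * poisson (lam N i) n)" for i n
  have eq: "(\<lambda>n. real n powr (1 + q) * gN lam N n) = (\<lambda>n. (\<Sum>i<N. h i n) / D)"
    by (simp add: fun_eq_iff gN_eq_poisson_mixture D_def h_def sum_distrib_left)
  have h_summable: "summable (h i)" if "i < N" for i
    unfolding h_def using poisson_size_biased_powr_moment(1) pos[OF that] q by (simp add: less_imp_le)
  show "summable (\<lambda>n. real n powr (1 + q) * gN lam N n)"
    unfolding eq by (intro summable_divide summable_sum h_summable) auto
  have "(\<Sum>n. real n powr (1 + q) * gN lam N n) = (\<Sum>i<N. suminf (h i)) / D"
  proof -
    have "(\<Sum>n. \<Sum>i<N. h i n) = (\<Sum>i<N. suminf (h i))"
      by (rule suminf_sum) (simp add: h_summable)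
    then show ?thesis
      unfolding eq using h_summable by (subst suminf_divide) (auto intro: summable_sum)
  qed
  also have "\<dots> \<le> (\<Sum>i<N. 2 * lam N i + 2 * lam N i powr p) / D"
  proof (intro divide_right_mono sum_mono)
    fix i assume "i \<in> {..<N}"
    then have "0 \<le> lam N i"
      using pos by (simp add: less_imp_le)
    then show "suminf (h i) \<le> 2 * lam N i + 2 * lam N i powr p"
      using poisson_size_biased_powr_moment(2) sq_mul_add_one_powr_le q p
      unfolding h_def by (meson order_trans)
  qed (use D in simp)
  also have "\<dots> = 2 + 2 * ((\<Sum>i<N. lam N i powr p) / real N) / muN lam N"
    using D N by (simp add: sum.distrib muN_def D_def[symmetric] field_simps flip: sum_distrib_left)
  finally show "(\<Sum>n. real n powr (1 + q) * gN lam N n)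
      \<le> 2 + 2 * ((\<Sum>i<N. lam N i powr p) / real N) / muN lam N" .
qed

lemma bigo_neg_powr_tendsto_0:
  fixes F :: "nat \<Rightarrow> real"
  assumes "F \<in> O(\<lambda>N. real N powr (- a))" and "0 < a"
  shows "F \<longlonglongrightarrow> 0"
proof -
  obtain c where c: "\<forall>\<^sub>F N in sequentially. norm (F N) \<le> c * norm (real N powr (- a))"
    using assms(1) by (elim landau_o.bigE)
  show ?thesis
  proof (rule Lim_null_comparison)
    show "\<forall>\<^sub>F N in sequentially. norm (F N) \<le> c * real N powr (- a)"
      using c by simp
    show "(\<lambda>N. c * real N powr (- a)) \<longlonglongrightarrow> 0"
      using assms(2) by (intro tendsto_mult_right_zero tendsto_neg_powr filterlim_real_sequentially) simp
  qed
qed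

lemma abs_le_two_d_TV:
  assumes "summable (\<lambda>j. \<bar>p j - q j\<bar>)"
  shows "\<bar>p n - q n\<bar> \<le> 2 * d_TV p q"
  using sum_le_suminf[OF assms, of "{n}"] by (simp add: d_TV_def)

lemma tendsto_of_d_TV_tendsto_0:
  assumes "\<forall>\<^sub>F N in sequentially. summable (\<lambda>n. \<bar>p N n - q n\<bar>)"
    and "(\<lambda>N. d_TV (p N) q) \<longlonglongrightarrow> 0"
  shows "(\<lambda>N. p N n) \<longlonglongrightarrow> q n"
proof -
  have "(\<lambda>N. p N n - q n) \<longlonglongrightarrow> 0"
  proof (rule Lim_null_comparison)
    show "\<forall>\<^sub>F N in sequentially. norm (p N n - q n) \<le> 2 * d_TV (p N) q"
      using assms(1) by eventually_elim (simp add: abs_le_two_d_TV)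
    show "(\<lambda>N. 2 * d_TV (p N) q) \<longlonglongrightarrow> 0"
      using tendsto_mult_right_zero[OF assms(2)] .
  qed
  then show ?thesis
    by (simp add: LIM_zero_iff)
qed

lemma suminf_le_of_tendsto:
  fixes a :: "nat \<Rightarrow> nat \<Rightarrow> real"
  assumes lim: "\<And>n. (\<lambda>N. a N n) \<longlonglongrightarrow> b n" and nonneg: "\<And>N n. 0 \<le> a N n"
    and bound: "\<forall>\<^sub>F N in sequentially. summable (a N) \<and> suminf (a N) \<le> A"
  shows "summable b" and "suminf b \<le> A"
proof -
  have partial_le: "(\<Sum>n<K. b n) \<le> A" for K
  proof (rule tendsto_upperbound)
    show "(\<lambda>N. \<Sum>n<K. a N n) \<longlonglongrightarrow> (\<Sum>n<K. b n)"
      by (intro tendsto_sum lim)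
    show "\<forall>\<^sub>F N in sequentially. (\<Sum>n<K. a N n) \<le> A"
      using bound by eventually_elim (auto intro: order_trans[OF sum_le_suminf] nonneg)
  qed simp
  have "0 \<le> b n" for n
    by (rule tendsto_lowerbound[OF lim]) (simp_all add: nonneg)
  then show summable: "summable b"
    by (rule bounded_imp_summable[where B = A]) (metis lessThan_Suc_atMost partial_le)
  show "suminf b \<le> A"
    by (rule suminf_le_const[OF summable partial_le])
qed

lemma powr_moment_of_d_TV_limit:
  fixes G :: "nat \<Rightarrow> nat \<Rightarrow> real" and g :: "nat \<Rightarrow> real"
  assumes G_nonneg: "\<And>N n. 0 \<le> G N n"
    and summable_diff: "\<forall>\<^sub>F N in sequentially. summable (\<lambda>n. \<bar>G N n - g n\<bar>)"
    and tv: "(\<lambda>N. d_TV (G N) g) \<longlonglongrightarrow> 0"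
    and moment: "\<forall>\<^sub>F N in sequentially. summable (\<lambda>n. real n powr s * G N n)
                   \<and> (\<Sum>n. real n powr s * G N n) \<le> A"
  shows "0 \<le> g n"
    and "summable (\<lambda>n. real n powr s * g n)"
    and "(\<Sum>n. real n powr s * g n) \<le> A"
proof -
  have lim: "(\<lambda>N. G N n) \<longlonglongrightarrow> g n" for n
    by (rule tendsto_of_d_TV_tendsto_0[OF summable_diff tv])
  show "0 \<le> g n"
    by (rule tendsto_lowerbound[OF lim]) (simp_all add: G_nonneg)
  show "summable (\<lambda>n. real n powr s * g n)" "(\<Sum>n. real n powr s * g n) \<le> A"
    using suminf_le_of_tendsto[of "\<lambda>N n. real n powr s * G N n", OF tendsto_mult_left[OF lim] _ moment]
    by (simp_all add: G_nonneg)
qed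

lemma first_moment_diff_le:
  fixes p r :: "nat \<Rightarrow> real" and X q :: real
  assumes X: "0 < X" and q: "0 < q" and nonneg: "\<And>n. 0 \<le> p n" "\<And>n. 0 \<le> r n"
    and summable_diff: "summable (\<lambda>n. \<bar>p n - r n\<bar>)"
    and moments: "summable (\<lambda>n. real n powr (1 + q) * p n)" "summable (\<lambda>n. real n powr (1 + q) * r n)"
  shows "summable (\<lambda>n. real n * \<bar>p n - r n\<bar>)"
    and "(\<Sum>n. real n * \<bar>p n - r n\<bar>) \<le> X * (2 * d_TV p r)
           + X powr (- q) * ((\<Sum>n. real n powr (1 + q) * p n) + (\<Sum>n. real n powr (1 + q) * r n))"
proof -
  define R where
    "R n = X * \<bar>p n - r n\<bar> + X powr (- q) * (real n powr (1 + q) * p n + real n powr (1 + q) * r n)"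
    for n
  have R_sums: "R sums (X * (2 * d_TV p r)
      + X powr (- q) * ((\<Sum>n. real n powr (1 + q) * p n) + (\<Sum>n. real n powr (1 + q) * r n)))"
    unfolding R_def d_TV_def
    by (intro sums_add sums_mult summable_sums moments) (simp add: summable_sums[OF summable_diff])
  have le_R: "real n * \<bar>p n - r n\<bar> \<le> R n" for n
  proof (cases "real n \<le> X")
    case True
    have "0 \<le> X powr (- q) * (real n powr (1 + q) * p n + real n powr (1 + q) * r n)"
      using nonneg by simp
    moreover have "real n * \<bar>p n - r n\<bar> \<le> X * \<bar>p n - r n\<bar>"
      using True by (intro mult_right_mono) auto
    ultimately show ?thesis
      unfolding R_def by linarith
  next
    case False
    then have "real n = real n powr (1 + q) * real n powr (- q)"
      using X by (simp flip: powr_add)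
    also have "\<dots> \<le> real n powr (1 + q) * X powr (- q)"
      using False X q by (intro mult_left_mono powr_mono2') auto
    finally have "real n * \<bar>p n - r n\<bar> \<le> real n powr (1 + q) * X powr (- q) * (p n + r n)"
      by (rule mult_mono) (use nonneg in \<open>auto simp: abs_le_iff\<close>)
    then show ?thesis
      unfolding R_def using X by (simp add: algebra_simps add_increasing)
  qed
  show summable: "summable (\<lambda>n. real n * \<bar>p n - r n\<bar>)"
    by (rule summable_comparison_test'[OF sums_summable[OF R_sums], of 0]) (use le_R in auto)
  show "(\<Sum>n. real n * \<bar>p n - r n\<bar>) \<le> X * (2 * d_TV p r)
      + X powr (- q) * ((\<Sum>n. real n powr (1 + q) * p n) + (\<Sum>n. real n powr (1 + q) * r n))"
    using suminf_le[OF le_R summable sums_summable[OF R_sums]] sums_unique[OF R_sums] by simp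
qed

lemma first_moment_distance_rate:
  fixes G :: "nat \<Rightarrow> nat \<Rightarrow> real" and g :: "nat \<Rightarrow> real"
  assumes G_nonneg: "\<And>N n. 0 \<le> G N n" and q: "0 < q" and \<alpha>: "0 < \<alpha>"
    and summable_diff: "\<forall>\<^sub>F N in sequentially. summable (\<lambda>n. \<bar>G N n - g n\<bar>)"
    and tv: "(\<lambda>N. d_TV (G N) g) \<in> O(\<lambda>N. real N powr (- \<alpha>))"
    and moment: "\<forall>\<^sub>F N in sequentially. summable (\<lambda>n. real n powr (1 + q) * G N n)
                   \<and> (\<Sum>n. real n powr (1 + q) * G N n) \<le> A"
  shows "\<forall>\<^sub>F N in sequentially. summable (\<lambda>n. real n * \<bar>G N n - g n\<bar>)"
    and "(\<lambda>N. \<Sum>n. real n * \<bar>G N n - g n\<bar>) \<in> O(\<lambda>N. real N powr (- (\<alpha> * q / (1 + q))))"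
proof -
  define \<gamma> where "\<gamma> = \<alpha> * q / (1 + q)"
  obtain c where tv_le: "\<forall>\<^sub>F N in sequentially. \<bar>d_TV (G N) g\<bar> \<le> c * real N powr (- \<alpha>)"
    using tv by (elim landau_o.bigE) simp
  note g = powr_moment_of_d_TV_limit[OF G_nonneg summable_diff bigo_neg_powr_tendsto_0[OF tv \<alpha>] moment]
  have bound: "\<forall>\<^sub>F N in sequentially. summable (\<lambda>n. real n * \<bar>G N n - g n\<bar>)
      \<and> (\<Sum>n. real n * \<bar>G N n - g n\<bar>) \<le> (2 * c + 2 * A) * real N powr (- \<gamma>)"
    using summable_diff moment tv_le eventually_gt_at_top[of 0]
  proof eventually_elim
    case (elim N)
    define X where "X = real N powr (\<alpha> / (1 + q))"
    have X: "0 < X"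
      using elim by (simp add: X_def)
    note split = first_moment_diff_le[OF X q G_nonneg g(1) elim(1) conjunct1[OF elim(2)] g(2)]
    have "X * real N powr (- \<alpha>) = real N powr (- \<gamma>)"
      using q by (simp add: X_def \<gamma>_def field_simps flip: powr_add)
    moreover have "X powr (- q) = real N powr (- \<gamma>)"
      by (simp add: X_def \<gamma>_def powr_powr)
    ultimately have "X * (2 * (c * real N powr (- \<alpha>))) + X powr (- q) * (A + A)
        = (2 * c + 2 * A) * real N powr (- \<gamma>)"
      by (simp add: algebra_simps)
    moreover have "X * (2 * d_TV (G N) g) \<le> X * (2 * (c * real N powr (- \<alpha>)))"
      using X elim(3) by simp
    moreover have "X powr (- q) * ((\<Sum>n. real n powr (1 + q) * G N n) + (\<Sum>n. real n powr (1 + q) * g n))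
        \<le> X powr (- q) * (A + A)"
      using elim(2) g(3) by (intro mult_left_mono add_mono) auto
    ultimately show ?case
      using split by linarith
  qed
  then show "\<forall>\<^sub>F N in sequentially. summable (\<lambda>n. real n * \<bar>G N n - g n\<bar>)"
    by eventually_elim simp
  show "(\<lambda>N. \<Sum>n. real n * \<bar>G N n - g n\<bar>) \<in> O(\<lambda>N. real N powr (- \<gamma>))"
  proof (rule bigoI)
    show "\<forall>\<^sub>F N in sequentially. norm (\<Sum>n. real n * \<bar>G N n - g n\<bar>)
        \<le> (2 * c + 2 * A) * norm (real N powr (- \<gamma>))"
      using bound by eventually_elim (simp add: suminf_nonneg)
  qed
qed

lemma C1_imp_muN_lower_bound:
  assumes "C1 lam"
  obtains m0 where "0 < m0" and "\<forall>\<^sub>F N in sequentially. m0 \<le> muN lam N"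
proof -
  from assms obtain \<mu> \<alpha> where \<mu>: "0 < \<mu>" and \<alpha>: "0 < \<alpha>"
    and rate: "(\<lambda>N. \<bar>muN lam N - \<mu>\<bar>) \<in> O(\<lambda>N. real N powr (- \<alpha>))"
    unfolding C1_def by blast
  have "muN lam \<longlonglongrightarrow> \<mu>"
    using bigo_neg_powr_tendsto_0[OF rate \<alpha>] by (simp add: tendsto_rabs_zero_iff LIM_zero_iff)
  then have "\<forall>\<^sub>F N in sequentially. \<mu> / 2 < muN lam N"
    using \<mu> by (intro order_tendstoD(1)) auto
  then show ?thesis
    using \<mu> by (intro that[of "\<mu> / 2"]) (auto elim: eventually_mono)
qed

lemma C3_imp_powr_moment_bound:
  assumes "C3 lam"
  obtains q p B where "0 < q" "q \<le> 1" "2 + q \<le> p"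
    and "\<forall>\<^sub>F N in sequentially. (\<Sum>i<N. lam N i powr p) / real N \<le> B"
proof -
  from assms obtain \<tau> where \<tau>: "3 < \<tau>"
    and C3_at: "\<And>\<epsilon>. 0 < \<epsilon> \<Longrightarrow> 1 / (\<tau> - 1) + \<epsilon> < 1 / 2 \<Longrightarrow>
      \<exists>B. \<forall>\<^sub>F N in sequentially. (\<Sum>i<N. lam N i powr (\<tau> - 1 - \<epsilon>)) / real N \<le> B"
    unfolding C3_def by blast
  define r where "r = 1 / (\<tau> - 1)"
  define \<epsilon> where "\<epsilon> = min ((1 / 2 - r) / 2) ((\<tau> - 3) / 2)"
  define q where "q = min ((\<tau> - 3) / 2) 1"
  have "r < 1 / 2"
    using \<tau> by (simp add: r_def field_simps)
  moreover have "\<epsilon> \<le> (1 / 2 - r) / 2"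
    unfolding \<epsilon>_def by (rule min.cobounded1)
  ultimately have "r + \<epsilon> < 1 / 2"
    by argo
  moreover have "0 < \<epsilon>"
    using \<tau> \<open>r < 1 / 2\<close> by (simp add: \<epsilon>_def)
  ultimately obtain B
    where B: "\<forall>\<^sub>F N in sequentially. (\<Sum>i<N. lam N i powr (\<tau> - 1 - \<epsilon>)) / real N \<le> B"
    using C3_at unfolding r_def by blast
  have "q \<le> (\<tau> - 3) / 2"
    unfolding q_def by (rule min.cobounded1)
  moreover have "\<epsilon> \<le> (\<tau> - 3) / 2"
    unfolding \<epsilon>_def by (rule min.cobounded2)
  ultimately have "2 + q \<le> \<tau> - 1 - \<epsilon>"
    by argo
  moreover have "0 < q" "q \<le> 1"
    using \<tau> by (simp_all add: q_def)
  ultimately show ?thesis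
    using that[OF _ _ _ B] by blast
qed

lemma gN_powr_moment_eventually_bounded:
  assumes pos: "\<And>N i. i < N \<Longrightarrow> 0 < lam N i" and "C1 lam" and "C3 lam"
  obtains q A where "0 < q"
    and "\<forall>\<^sub>F N in sequentially. summable (\<lambda>n. real n powr (1 + q) * gN lam N n)
           \<and> (\<Sum>n. real n powr (1 + q) * gN lam N n) \<le> A"
proof -
  obtain m0 where m0: "0 < m0" and muN_ge: "\<forall>\<^sub>F N in sequentially. m0 \<le> muN lam N"
    using C1_imp_muN_lower_bound[OF \<open>C1 lam\<close>] .
  obtain q p B where q: "0 < q" "q \<le> 1" and p: "2 + q \<le> p"
    and B: "\<forall>\<^sub>F N in sequentially. (\<Sum>i<N. lam N i powr p) / real N \<le> B"
    using C3_imp_powr_moment_bound[OF \<open>C3 lam\<close>] .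
  have "\<forall>\<^sub>F N in sequentially. summable (\<lambda>n. real n powr (1 + q) * gN lam N n)
      \<and> (\<Sum>n. real n powr (1 + q) * gN lam N n) \<le> 2 + 2 * B / m0"
    using muN_ge B eventually_gt_at_top[of 0]
  proof eventually_elim
    case (elim N)
    have "0 \<le> (\<Sum>i<N. lam N i powr p) / real N"
      by (simp add: sum_nonneg)
    then have "((\<Sum>i<N. lam N i powr p) / real N) / muN lam N \<le> B / m0"
      using elim(1,2) m0 by (intro frac_le) auto
    moreover note gN_powr_moment_le[of N lam, OF pos elim(3) less_imp_le[OF q(1)] q(2) p]
    ultimately show ?case
      by linarith
  qed
  with q(1) show ?thesis
    by (rule that)
qed

theorem lemmaD6:
  fixes lam :: "nat \<Rightarrow> nat \<Rightarrow> real" and f g :: "nat \<Rightarrow> real"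
  assumes pos: "\<And>N i. i < N \<Longrightarrow> lam N i > 0"
    and "C1 lam" and "C2 lam f g" and "C3 lam"
  shows "\<exists>\<alpha> > 0. (\<forall>\<^sub>F N in sequentially. summable (\<lambda>n. real n * \<bar>gN lam N n - g n\<bar>)) \<and>
           (\<lambda>N. \<Sum>n. real n * \<bar>gN lam N n - g n\<bar>) \<in> O(\<lambda>N. real N powr (- \<alpha>))"
proof -
  obtain q A where q: "0 < q"
    and moment: "\<forall>\<^sub>F N in sequentially. summable (\<lambda>n. real n powr (1 + q) * gN lam N n)
                   \<and> (\<Sum>n. real n powr (1 + q) * gN lam N n) \<le> A"
    using gN_powr_moment_eventually_bounded[OF pos \<open>C1 lam\<close> \<open>C3 lam\<close>] .
  from \<open>C2 lam f g\<close> obtain \<alpha> where \<alpha>: "0 < \<alpha>"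
    and summable_diffs: "\<forall>\<^sub>F N in sequentially. summable (\<lambda>n. \<bar>fN lam N n - f n\<bar>)
                                   \<and> summable (\<lambda>n. \<bar>gN lam N n - g n\<bar>)"
    and tv: "(\<lambda>N. d_TV (gN lam N) g) \<in> O(\<lambda>N. real N powr (- \<alpha>))"
    unfolding C2_def by blast
  have summable_diff: "\<forall>\<^sub>F N in sequentially. summable (\<lambda>n. \<bar>gN lam N n - g n\<bar>)"
    using summable_diffs by (rule eventually_mono) simp
  show ?thesis
    using first_moment_distance_rate[OF gN_nonneg[OF pos] q \<alpha> summable_diff tv moment] \<alpha> q
    by (intro exI[of _ "\<alpha> * q / (1 + q)"]) auto
qed

end
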